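(* Let $X_1,\ldots,X_n\in\mathbb R^p$ ($n\ge1$) be given data, $\bar X=\frac1n\sum_i X_i$ and $S=\frac1n\sum_i(X_i-\bar X)(X_i-\bar X)^\top$. Let $\Psi\in\mathcal P_p$, $m\ge p$, $q\in\{1,2,\ldots\}$, and consider the (unnormalized) posterior $$\pi(\mu,\Sigma)=L(\mu,\Sigma)\cdot\mathcal W^{-q}(\Sigma\mid\Psi,m),\qquad \mu\in\mathbb R^p,\ \Sigma\in\mathcal P_p,$$ where $L(\mu,\Sigma)=|\Sigma|^{-n/2}\exp\big(-\tfrac12\sum_{i=1}^n(X_i-\mu)^\top\Sigma^{-1}(X_i-\mu)\big)$. Let $A=\Psi^{-1/2}S\Psi^{-1/2}$, write $A=V\operatorname{diag}(a_1,\ldots,a_p)V^\top$ with $V$ orthogonal, and let $N=n+p+qm+1$. Then: (i) for each $i$, the equation $q\lambda^q+n a_i\lambda-N=0$ has exactly one positive solution $\hat\lambda_i$; (ii) $\pi$ has a unique maximizer $(\hat\mu,\hat\Sigma)$ over $\mathbb R^p\times\mathcal P_p$, given by $\hat\mu=\bar X$ and $$\hat\Sigma=\Psi^{1/2}V\hat\Delta^{-1}V^\top\Psi^{1/2},\qquad \hat\Delta=\operatorname{diag}(\hat\lambda_1,\ldots,\hat\lambda_p).$$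
   Context: $\mathcal P_p$ is the set of positive definite $p\times p$ real matrices; $\Psi^{1/2}$ is the positive definite square root and $\Psi^{-1/2}=(\Psi^{1/2})^{-1}$. The power inverse Wishart density is $\mathcal W^{-q}(\Sigma\mid\Psi,m)=c_{m,q}^{-1}\exp(-\tfrac12\operatorname{tr}((\Psi^{-1/2}\Sigma\Psi^{-1/2})^{-q}))|\Psi|^{qm/2}|\Sigma|^{-(qm+p+1)/2}$ with $c_{m,q}\in(0,\infty)$ a normalizing constant. The maximizer of $\pi$ is called the (power inverse Wishart) MAP estimator; it corresponds to a power inverse Wishart prior on $\Sigma$ and an improper uniform prior on $\mu$. *)

theory Defs
  imports "HOL-Analysis.Analysis"
begin

definition pos_def_mat :: "real^'p^'p \<Rightarrow> bool" where
  "pos_def_mat M \<longleftrightarrow> transpose M = M \<and> (\<forall>x. x \<noteq> 0 \<longrightarrow> x \<bullet> (M *v x) > 0)"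

definition pd_sqrt :: "real^'p^'p \<Rightarrow> real^'p^'p" where
  "pd_sqrt M = (THE R. pos_def_mat R \<and> R ** R = M)"

definition mat_pow :: "real^'p^'p \<Rightarrow> nat \<Rightarrow> real^'p^'p" where
  "mat_pow M k = ((\<lambda>B. M ** B) ^^ k) (mat 1)"

definition diag_mat :: "real^'p \<Rightarrow> real^'p^'p" where
  "diag_mat a = (\<chi> i j. if i = j then a $ i else 0)"

definition outer :: "real^'p \<Rightarrow> real^'p \<Rightarrow> real^'p^'p" where
  "outer x y = (\<chi> i j. x $ i * y $ j)"

definition sample_mean :: "nat \<Rightarrow> (nat \<Rightarrow> real^'p) \<Rightarrow> real^'p" where
  "sample_mean n X = (1 / real n) *\<^sub>R (\<Sum>i<n. X i)"

definition sample_cov :: "nat \<Rightarrow> (nat \<Rightarrow> real^'p) \<Rightarrow> real^'p^'p" where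
  "sample_cov n X = (1 / real n) *\<^sub>R
     (\<Sum>i<n. outer (X i - sample_mean n X) (X i - sample_mean n X))"

definition likelihood :: "nat \<Rightarrow> (nat \<Rightarrow> real^'p) \<Rightarrow> real^'p \<Rightarrow> real^'p^'p \<Rightarrow> real" where
  "likelihood n X \<mu> \<Sigma> = det \<Sigma> powr (- real n / 2) *
     exp (- (1/2) * (\<Sum>i<n. (X i - \<mu>) \<bullet> (matrix_inv \<Sigma> *v (X i - \<mu>))))"

definition pow_inv_wishart :: "real \<Rightarrow> real^'p^'p \<Rightarrow> real \<Rightarrow> nat \<Rightarrow> real^'p^'p \<Rightarrow> real" where
  "pow_inv_wishart c \<Psi> m q \<Sigma> =
     (1 / c) * exp (- (1/2) * trace (mat_pow (matrix_inv
        (matrix_inv (pd_sqrt \<Psi>) ** \<Sigma> ** matrix_inv (pd_sqrt \<Psi>))) q))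
     * det \<Psi> powr (real q * m / 2)
     * det \<Sigma> powr (- (real q * m + real CARD('p) + 1) / 2)"

definition posterior :: "real \<Rightarrow> nat \<Rightarrow> (nat \<Rightarrow> real^'p) \<Rightarrow> real^'p^'p \<Rightarrow> real \<Rightarrow> nat
    \<Rightarrow> real^'p \<Rightarrow> real^'p^'p \<Rightarrow> real" where
  "posterior c n X \<Psi> m q \<mu> \<Sigma> = likelihood n X \<mu> \<Sigma> * pow_inv_wishart c \<Psi> m q \<Sigma>"

end

theory Submission
  imports Defs
begin

text \<open>
  Write R for the positive definite square root of Psi, A = R^-1 S R^-1 = V diag(a) V^T for the
  whitened sample covariance and Lam = R Sigma^-1 R for the whitened precision matrix.
  Splitting the data term into a sample covariance part and a mean part gives

    posterior(mu, Sigma) = K * exp (G(Lam)/2 - n/2 * (Xbar - mu)^T Sigma^-1 (Xbar - mu)),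
    G(Lam) = N ln det Lam - n tr(Lam A) - tr(Lam^q),

  with K > 0 independent of (mu, Sigma); the mean part is maximised exactly at mu = Xbar.
  Diagonalising Lam = U diag(d) U^T turns G(Lam) into the sum over j, k of W_kj^2 phi_k(d_j),
  where W = V^T U is orthogonal and phi_k(t) = N ln t - n a_k t - t^q is uniquely maximised on
  (0, infinity) at the positive root lam_k of q t^q + n a_k t - N = 0. Since the rows of W
  have unit length, G(Lam) <= sum_k phi_k(lam_k), with equality only for Lam = V diag(lam) V^T,
  i.e. for Sigma = R V diag(lam)^-1 V^T R.
\<close>

abbreviation spectral_mat :: "real^'n^'n \<Rightarrow> real^'n \<Rightarrow> real^'n^'n" where
  "spectral_mat U d \<equiv> U ** diag_mat d ** transpose U"

lemma mul_diag_entry: "(U ** diag_mat d) $ i $ j = d $ j * U $ i $ j"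
  by (simp add: matrix_matrix_mult_def diag_mat_def if_distrib if_distribR cong: if_cong)

lemma diag_mul_entry: "(diag_mat d ** U) $ i $ j = d $ i * U $ i $ j"
  by (simp add: matrix_matrix_mult_def diag_mat_def if_distrib if_distribR cong: if_cong)

lemma diag_mat_mul: "diag_mat d ** diag_mat e = diag_mat (\<chi> i. d $ i * e $ i)"
  by (simp add: vec_eq_iff mul_diag_entry) (simp add: diag_mat_def)

lemma diag_mat_one: "diag_mat (\<chi> i. 1) = mat 1"
  by (simp add: diag_mat_def mat_def vec_eq_iff)

lemma transpose_diag_mat [simp]: "transpose (diag_mat d) = diag_mat d"
  by (simp add: diag_mat_def transpose_def vec_eq_iff)

lemma diag_mat_vec: "diag_mat d *v x = (\<chi> i. d $ i * x $ i)"
  by (simp add: diag_mat_def matrix_vector_mult_def vec_eq_iff if_distrib if_distribR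
      cong: if_cong)

lemma det_diag_mat: "det (diag_mat d) = (\<Prod>i\<in>UNIV. d $ i)"
  by (subst det_diagonal) (auto simp: diag_mat_def)

lemma trace_diag_mat: "trace (diag_mat d) = (\<Sum>i\<in>UNIV. d $ i)"
  by (simp add: trace_def diag_mat_def)

lemma orthogonal_mul_transpose: "orthogonal_matrix U \<Longrightarrow> U ** transpose U = mat 1"
  and orthogonal_transpose_mul: "orthogonal_matrix U \<Longrightarrow> transpose U ** U = mat 1"
  by (simp_all add: orthogonal_matrix_def)

lemma matrix_inv_eqI:
  fixes A :: "real^'n^'n"
  assumes "A ** B = mat 1"
  shows "matrix_inv A = B"
proof -
  have "B ** A = mat 1" using assms matrix_left_right_inverse by blast
  then have "\<exists>A'. A ** A' = mat 1 \<and> A' ** A = mat 1" using assms by blast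
  then have inv: "A ** matrix_inv A = mat 1 \<and> matrix_inv A ** A = mat 1"
    unfolding matrix_inv_def by (rule someI_ex)
  have "matrix_inv A = matrix_inv A ** (A ** B)" using assms by simp
  also have "\<dots> = B" using inv by (simp add: matrix_mul_assoc)
  finally show ?thesis .
qed

lemma spectral_mat_mul:
  fixes U :: "real^'n^'n"
  assumes "orthogonal_matrix U"
  shows "spectral_mat U d ** spectral_mat U e = spectral_mat U (\<chi> i. d $ i * e $ i)"
proof -
  have "spectral_mat U d ** spectral_mat U e
      = U ** ((diag_mat d ** (transpose U ** U)) ** diag_mat e) ** transpose U"
    by (simp add: matrix_mul_assoc)
  also have "\<dots> = spectral_mat U (\<chi> i. d $ i * e $ i)"
    using assms by (simp add: orthogonal_transpose_mul diag_mat_mul)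
  finally show ?thesis .
qed

lemma matrix_inv_spectral:
  fixes U :: "real^'n^'n"
  assumes "orthogonal_matrix U" and "\<And>i. d $ i \<noteq> 0"
  shows "matrix_inv (diag_mat d) = diag_mat (\<chi> i. 1 / d $ i)"
    and "matrix_inv (spectral_mat U d) = spectral_mat U (\<chi> i. 1 / d $ i)"
  using assms by (intro matrix_inv_eqI;
      simp add: diag_mat_mul diag_mat_one spectral_mat_mul orthogonal_mul_transpose)+

lemma mat_pow_spectral:
  fixes U :: "real^'n^'n"
  assumes "orthogonal_matrix U"
  shows "mat_pow (spectral_mat U d) k = spectral_mat U (\<chi> i. d $ i ^ k)"
proof (induction k)
  case 0
  show ?case using assms by (simp add: mat_pow_def diag_mat_one orthogonal_mul_transpose)
next
  case (Suc k)
  have "mat_pow (spectral_mat U d) (Suc k) = spectral_mat U d ** spectral_mat U (\<chi> i. d $ i ^ k)"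
    by (simp add: mat_pow_def Suc.IH[unfolded mat_pow_def])
  then show ?case using assms by (simp add: spectral_mat_mul)
qed

lemma det_orthogonal_conj:
  fixes U :: "real^'n^'n"
  assumes "orthogonal_matrix U"
  shows "det (U ** D ** transpose U) = det D"
proof -
  have "det U * det U = 1" using det_orthogonal_matrix[OF assms] by auto
  then show ?thesis by (simp add: det_mul)
qed

lemma trace_orthogonal_conj:
  fixes U :: "real^'n^'n"
  assumes "orthogonal_matrix U"
  shows "trace (U ** D ** transpose U) = trace D"
proof -
  have "trace (U ** D ** transpose U) = trace (transpose U ** (U ** D))" by (rule trace_mul_sym)
  also have "\<dots> = trace D" using assms by (simp add: matrix_mul_assoc orthogonal_transpose_mul)
  finally show ?thesis .
qed

lemma inner_matrix_transpose:
  fixes U :: "real^'n^'m"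
  shows "x \<bullet> (U *v y) = (transpose U *v x) \<bullet> y"
  by (metis dot_lmul_matrix transpose_matrix_vector)

lemma symmetric_inner_swap:
  fixes M :: "real^'n^'n"
  assumes "transpose M = M"
  shows "(M *v x) \<bullet> y = x \<bullet> (M *v y)"
  by (metis assms inner_matrix_transpose)

lemma spectral_quadratic_form:
  fixes U :: "real^'n^'n"
  shows "x \<bullet> (spectral_mat U d *v x) = (\<Sum>i\<in>UNIV. d $ i * ((transpose U *v x) $ i)^2)"
proof -
  have "x \<bullet> (spectral_mat U d *v x) = (transpose U *v x) \<bullet> (diag_mat d *v (transpose U *v x))"
    by (simp add: inner_matrix_transpose matrix_vector_mul_assoc[symmetric])
  then show ?thesis by (simp add: inner_vec_def diag_mat_vec power2_eq_square mult_ac)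
qed

lemma matrix_mul_column: "(A ** B) $ i $ j = (A *v column j B) $ i"
  by (simp add: matrix_matrix_mult_def matrix_vector_mult_def column_def)

lemma spectral_mat_column:
  fixes U :: "real^'n^'n"
  assumes "orthogonal_matrix U"
  shows "spectral_mat U d *v column j U = d $ j *\<^sub>R column j U"
proof -
  have MU: "spectral_mat U d ** U = U ** diag_mat d"
    using assms by (simp add: matrix_mul_assoc[symmetric] orthogonal_transpose_mul)
  have "(spectral_mat U d *v column j U) $ i = d $ j * U $ i $ j" for i
    using matrix_mul_column[of "spectral_mat U d" U i j] by (simp add: MU mul_diag_entry)
  then show ?thesis by (simp add: vec_eq_iff column_def)
qed

lemma orthogonal_column_norm:
  fixes W :: "real^'n^'n"
  assumes "orthogonal_matrix W"
  shows "column j W \<bullet> column j W = 1" and "(\<Sum>k\<in>UNIV. (W $ k $ j)^2) = 1"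
proof -
  show "column j W \<bullet> column j W = 1"
    using assms by (simp add: orthogonal_matrix_orthonormal_columns norm_eq_1)
  then show "(\<Sum>k\<in>UNIV. (W $ k $ j)^2) = 1" by (simp add: inner_vec_def column_def power2_eq_square)
qed

lemma orthogonal_row_sum:
  fixes W :: "real^'n^'n"
  assumes "orthogonal_matrix W"
  shows "(\<Sum>j\<in>UNIV. (W $ k $ j)^2) = 1"
proof -
  have "orthogonal_matrix (transpose W)" using assms by simp
  from orthogonal_column_norm(2)[OF this] show ?thesis by (simp add: transpose_def)
qed

section \<open>The spectral theorem for real symmetric matrices\<close>

text \<open>If the quadratic polynomial 2 t b + t^2 c is nowhere positive, its linear coefficient
  vanishes. This is the first-order condition satisfied by a maximiser of a quadratic form.\<close>
lemma linear_coeff_zero_if_nonpos: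
  fixes b c :: real
  assumes "\<And>t. 2*t*b + t^2*c \<le> 0"
  shows "b = 0"
proof (rule ccontr)
  assume "b \<noteq> 0"
  define k where "k = \<bar>c\<bar> + 1"
  have k: "k > 0" unfolding k_def by linarith
  define t where "t = b / k"
  have "-1 < c/k" using k by (simp add: less_divide_eq k_def)
  then have "(b^2/k) * (2 + c/k) > 0" using \<open>b \<noteq> 0\<close> k by (intro mult_pos_pos) auto
  moreover have "2*t*b + t^2*c = (b^2/k) * (2 + c/k)"
    using k unfolding t_def power2_eq_square by (simp add: divide_simps) (simp add: algebra_simps)
  ultimately show False using assms[of t] by linarith
qed

lemma rayleigh_maximiser_eigenvector:
  fixes M :: "real^'n^'n"
  assumes sym: "transpose M = M" and S: "subspace S" and inv: "\<And>x. x \<in> S \<Longrightarrow> M *v x \<in> S"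
    and x: "x \<in> S" "norm x = 1"
    and max: "\<And>y. y \<in> S \<Longrightarrow> norm y = 1 \<Longrightarrow> y \<bullet> (M *v y) \<le> x \<bullet> (M *v x)"
  shows "M *v x = (x \<bullet> (M *v x)) *\<^sub>R x"
proof -
  define l where "l = x \<bullet> (M *v x)"
  have xx: "x \<bullet> x = 1" using x(2) by (simp add: norm_eq_1)
  text \<open>M x is orthogonal to every direction y in S orthogonal to x: perturb x along y.\<close>
  have orth: "y \<bullet> (M *v x) = 0" if y: "y \<in> S" "y \<bullet> x = 0" for y
  proof (rule linear_coeff_zero_if_nonpos)
    fix t :: real
    define z where "z = x + t *\<^sub>R y"
    have zS: "z \<in> S" unfolding z_def using S x y by (simp add: subspace_add subspace_scale)
    have zz: "z \<bullet> z = 1 + t^2 * (y \<bullet> y)"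
      unfolding z_def using xx y(2) by (simp add: algebra_simps inner_commute power2_eq_square)
    then have "z \<bullet> z > 0" by (simp add: add_pos_nonneg)
    then have nz: "norm z > 0" by simp
    have "((1 / norm z) *\<^sub>R z) \<bullet> (M *v ((1 / norm z) *\<^sub>R z)) \<le> l"
      unfolding l_def using zS nz S by (intro max) (simp_all add: subspace_scale)
    then have "z \<bullet> (M *v z) \<le> l * (norm z)^2"
      using nz by (simp add: matrix_vector_mult_scaleR power2_eq_square divide_le_eq)
    then have le: "z \<bullet> (M *v z) \<le> l * (1 + t^2 * (y \<bullet> y))"
      by (simp add: power2_norm_eq_inner zz)
    have "x \<bullet> (M *v y) = y \<bullet> (M *v x)"
      using symmetric_inner_swap[OF sym, of x y] by (simp add: inner_commute)
    then have "z \<bullet> (M *v z) = l + 2*t*(y \<bullet> (M *v x)) + t^2 * (y \<bullet> (M *v y))"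
      unfolding z_def l_def
      by (simp add: algebra_simps power2_eq_square)
    with le show "2*t*(y \<bullet> (M *v x)) + t^2*(y \<bullet> (M *v y) - l * (y \<bullet> y)) \<le> 0"
      by (simp add: algebra_simps)
  qed
  define w where "w = M *v x - l *\<^sub>R x"
  have wS: "w \<in> S" unfolding w_def using S x inv by (simp add: subspace_diff subspace_scale)
  have "x \<bullet> w = 0" unfolding w_def l_def using xx by (simp add: inner_diff_right)
  then have wx: "w \<bullet> x = 0" by (simp add: inner_commute)
  have "w \<bullet> w = w \<bullet> (M *v x) - l * (w \<bullet> x)" unfolding w_def by (simp add: inner_diff_right)
  also have "\<dots> = 0" using orth[OF wS wx] wx by simp
  finally show ?thesis unfolding w_def l_def by simp
qed

text \<open>A nonzero invariant subspace of a symmetric matrix contains a unit eigenvector: a maximiser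
  of the quadratic form on the (compact) unit sphere of the subspace.\<close>
lemma invariant_subspace_unit_eigenvector:
  fixes M :: "real^'n^'n"
  assumes sym: "transpose M = M" and S: "subspace S" and inv: "\<And>x. x \<in> S \<Longrightarrow> M *v x \<in> S"
    and "S \<noteq> {0}"
  obtains x where "x \<in> S" "norm x = 1" "M *v x = (x \<bullet> (M *v x)) *\<^sub>R x"
proof -
  obtain y where y: "y \<in> S" "y \<noteq> 0" using assms(4) S subspace_0 by blast
  define K where "K = S \<inter> sphere 0 1"
  have "compact K" unfolding K_def
    using S by (intro closed_Int_compact closed_subspace compact_sphere)
  moreover have "(1 / norm y) *\<^sub>R y \<in> K" unfolding K_def using y S by (simp add: subspace_scale)
  moreover have "continuous_on K (\<lambda>x. x \<bullet> (M *v x))"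
    by (intro continuous_on_inner continuous_on_id linear_continuous_on
        matrix_vector_mul_bounded_linear)
  ultimately obtain x where xK: "x \<in> K" and xmax: "\<forall>z\<in>K. z \<bullet> (M *v z) \<le> x \<bullet> (M *v x)"
    using continuous_attains_sup[of K] by blast
  then have "x \<in> S" "norm x = 1" by (auto simp: K_def)
  moreover from this have "M *v x = (x \<bullet> (M *v x)) *\<^sub>R x"
    by (intro rayleigh_maximiser_eigenvector[OF sym S inv]) (use xmax K_def in auto)
  ultimately show ?thesis using that by blast
qed

text \<open>By
  induction on the dimension: take a unit eigenvector x in S and recurse into the orthogonal
  complement of x in S, which is again invariant.\<close>
lemma invariant_subspace_eigenbasis:
  fixes M :: "real^'n^'n"
  assumes sym: "transpose M = M"
  shows "subspace S \<Longrightarrow> (\<And>x. x \<in> S \<Longrightarrow> M *v x \<in> S) \<Longrightarrow>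
    \<exists>B. B \<subseteq> S \<and> pairwise orthogonal B \<and> (\<forall>x\<in>B. norm x = 1 \<and> (\<exists>l. M *v x = l *\<^sub>R x))
      \<and> span B = S"
proof (induction "dim S" arbitrary: S rule: less_induct)
  case less
  show ?case
  proof (cases "S = {0}")
    case True
    then show ?thesis by (intro exI[of _ "{}"]) auto
  next
    case False
    then obtain x where xS: "x \<in> S" and nx: "norm x = 1" and eig: "M *v x = (x \<bullet> (M *v x)) *\<^sub>R x"
      using invariant_subspace_unit_eigenvector[OF sym less.prems] by blast
    have xx: "x \<bullet> x = 1" using nx by (simp add: norm_eq_1)
    define S' where "S' = S \<inter> {z. x \<bullet> z = 0}"
    have "{z. x \<bullet> z = 0} = {z. orthogonal x z}" by (simp add: orthogonal_def)
    then have subS': "subspace S'" unfolding S'_def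
      using less.prems(1) subspace_orthogonal_to_vector[of x] by (simp add: subspace_inter)
    have invS': "M *v z \<in> S'" if "z \<in> S'" for z
    proof -
      have "x \<bullet> (M *v z) = (M *v x) \<bullet> z" using symmetric_inner_swap[OF sym] by simp
      also have "\<dots> = (x \<bullet> (M *v x)) * (x \<bullet> z)" by (subst eig) simp
      finally show ?thesis using that less.prems(2) by (auto simp: S'_def)
    qed
    have "x \<notin> S'" using xx by (auto simp: S'_def)
    then have "S' \<subset> S" using xS unfolding S'_def by blast
    then have "dim S' < dim S"
      using subS' less.prems(1) by (metis dim_psubset span_eq_iff)
    from less.hyps[OF this subS' invS'] obtain B' where
      B': "B' \<subseteq> S'" "pairwise orthogonal B'" "\<forall>x\<in>B'. norm x = 1 \<and> (\<exists>l. M *v x = l *\<^sub>R x)"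
          "span B' = S'" by blast
    define B where "B = insert x B'"
    have "B \<subseteq> S" using B'(1) xS unfolding B_def S'_def by auto
    moreover have "pairwise orthogonal B" unfolding B_def
      using B'(1,2) by (auto simp: pairwise_insert orthogonal_def S'_def inner_commute)
    moreover have "\<forall>z\<in>B. norm z = 1 \<and> (\<exists>l. M *v z = l *\<^sub>R z)"
      unfolding B_def using B'(3) nx eig by blast
    moreover have "S \<subseteq> span B"
    proof
      fix z assume zS: "z \<in> S"
      have "z - (x \<bullet> z) *\<^sub>R x \<in> S'" unfolding S'_def using zS xS less.prems(1) xx
        by (simp add: subspace_diff subspace_scale inner_diff_right)
      then have "z - (x \<bullet> z) *\<^sub>R x \<in> span B" using B'(4) span_mono[of B' B] unfolding B_def by auto
      moreover have "(x \<bullet> z) *\<^sub>R x \<in> span B" unfolding B_def by (simp add: span_base span_scale)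
      ultimately show "z \<in> span B" using span_add by fastforce
    qed
    ultimately show ?thesis using less.prems(1) by (metis span_minimal subset_antisym)
  qed
qed

lemma symmetric_spectral_decomposition:
  fixes M :: "real^'n^'n"
  assumes sym: "transpose M = M"
  obtains U d where "orthogonal_matrix U" "M = spectral_mat U d"
proof -
  obtain B where B: "pairwise orthogonal B" "\<forall>x\<in>B. norm x = 1 \<and> (\<exists>l. M *v x = l *\<^sub>R x)"
      "span B = UNIV"
    using invariant_subspace_eigenbasis[OF sym, of UNIV] by auto
  have "0 \<notin> B" using B(2) by force
  then have indep: "independent B" using B(1) pairwise_orthogonal_independent by blast
  then have "finite B" using finiteI_independent by blast
  moreover have "card B = CARD('n)" using B(3) by (simp add: indep indep_card_eq_dim_span)
  ultimately obtain f where f: "bij_betw f (UNIV::'n set) B"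
    using finite_same_card_bij by (metis finite_class.finite_UNIV)
  have fB: "f j \<in> B" for j using f by (auto simp: bij_betw_def)
  have [simp]: "norm (f i) = 1" for i using B(2) fB by blast
  have [simp]: "orthogonal (f i) (f j)" if "i \<noteq> j" for i j
    using B(1) f that by (auto simp: pairwise_def bij_betw_def inj_on_def)
  define U where "U = (\<chi> i j. f j $ i)"
  have oU: "orthogonal_matrix U"
    by (simp add: U_def orthogonal_matrix_orthonormal_columns column_def)
  define d where "d = (\<chi> j. SOME l. M *v f j = l *\<^sub>R f j)"
  have eig: "M *v f j = (d $ j) *\<^sub>R f j" for j
  proof -
    have "\<exists>l. M *v f j = l *\<^sub>R f j" using B(2) fB by blast
    then show ?thesis unfolding d_def vec_lambda_beta by (rule someI_ex)
  qed
  have "(M ** U) $ i $ j = (U ** diag_mat d) $ i $ j" for i j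
  proof -
    have "(M ** U) $ i $ j = (M *v f j) $ i"
      by (simp add: matrix_matrix_mult_def matrix_vector_mult_def U_def)
    then show ?thesis by (simp add: eig mul_diag_entry U_def)
  qed
  then have MU: "M ** U = U ** diag_mat d" by (simp add: vec_eq_iff)
  have "M = M ** (U ** transpose U)" using oU by (simp add: orthogonal_mul_transpose)
  also have "\<dots> = spectral_mat U d" by (simp add: matrix_mul_assoc MU)
  finally show ?thesis using oU that by blast
qed

section \<open>Positive definite matrices\<close>

lemma pd_symmetric: "pos_def_mat M \<Longrightarrow> transpose M = M"
  by (simp add: pos_def_mat_def)

lemma pd_injective: "pos_def_mat R \<Longrightarrow> R *v w = 0 \<Longrightarrow> w = 0"
  unfolding pos_def_mat_def by force

lemma pd_spectral_mat:
  fixes U :: "real^'n^'n"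
  assumes U: "orthogonal_matrix U" and d: "\<And>i. d $ i > 0"
  shows "pos_def_mat (spectral_mat U d)"
  unfolding pos_def_mat_def
proof (intro conjI allI impI)
  show "transpose (spectral_mat U d) = spectral_mat U d"
    by (simp add: matrix_transpose_mul matrix_mul_assoc)
  fix x :: "real^'n" assume "x \<noteq> 0"
  moreover have "U *v (transpose U *v x) = x"
    using U by (simp only: matrix_vector_mul_assoc orthogonal_mul_transpose matrix_vector_mul_lid)
  ultimately obtain i where i: "(transpose U *v x) $ i \<noteq> 0"
    by (metis matrix_vector_mult_0_right vec_eq_iff zero_index)
  have "0 < (\<Sum>j\<in>UNIV. d $ j * ((transpose U *v x) $ j)^2)"
  proof (rule sum_pos2[where i=i])
    show "0 < d $ i * ((transpose U *v x) $ i)^2" using i d by simp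
    show "0 \<le> d $ j * ((transpose U *v x) $ j)^2" for j using d[of j] by simp
  qed auto
  then show "0 < x \<bullet> (spectral_mat U d *v x)" by (simp add: spectral_quadratic_form)
qed

lemma pd_eigenvalue_pos:
  fixes U :: "real^'n^'n"
  assumes "pos_def_mat (spectral_mat U d)" and U: "orthogonal_matrix U"
  shows "d $ j > 0"
proof -
  let ?v = "column j U"
  have vv: "?v \<bullet> ?v = 1" using orthogonal_column_norm(1)[OF U] .
  then have "?v \<noteq> 0" by auto
  then have "0 < ?v \<bullet> (spectral_mat U d *v ?v)" using assms(1) by (simp add: pos_def_mat_def)
  also have "\<dots> = d $ j" using spectral_mat_column[OF U] vv by simp
  finally show ?thesis .
qed

lemma pd_spectral_decomposition:
  fixes M :: "real^'n^'n"
  assumes "pos_def_mat M"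
  obtains U d where "orthogonal_matrix U" "M = spectral_mat U d" "\<And>i. d $ i > 0"
proof -
  obtain U d where "orthogonal_matrix U" "M = spectral_mat U d"
    using symmetric_spectral_decomposition pd_symmetric[OF assms] by metis
  then show ?thesis using pd_eigenvalue_pos assms that by blast
qed

text \<open>Uniqueness of positive definite square roots: a positive definite R with R R = U diag(d) U^T
  acts on every column of U by the square root of the corresponding eigenvalue, because
  R + sqrt(d_j) is injective.\<close>
lemma pd_square_root_spectral:
  fixes R :: "real^'n^'n"
  assumes R: "pos_def_mat R" "R ** R = spectral_mat U d"
    and U: "orthogonal_matrix U" and d: "\<And>i. d $ i > 0"
  shows "R = spectral_mat U (\<chi> i. sqrt (d $ i))"
proof -
  define s where "s = (\<chi> i. sqrt (d $ i))"
  have col: "R *v column j U = s $ j *\<^sub>R column j U" for j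
  proof (rule ccontr)
    let ?u = "column j U"
    define w where "w = R *v ?u - s $ j *\<^sub>R ?u"
    assume "R *v ?u \<noteq> s $ j *\<^sub>R ?u"
    then have "w \<noteq> 0" by (simp add: w_def)
    then have pos: "w \<bullet> (R *v w) > 0" "w \<bullet> w > 0" using R(1) by (auto simp: pos_def_mat_def)
    have "R *v w + s $ j *\<^sub>R w = (R ** R) *v ?u - (s $ j * s $ j) *\<^sub>R ?u"
      unfolding w_def by (simp add: matrix_vector_mul_assoc[symmetric] algebra_simps)
    also have "\<dots> = 0" using R(2) spectral_mat_column[OF U] d[of j] by (simp add: s_def)
    finally have "w \<bullet> (R *v w) + s $ j * (w \<bullet> w) = 0"
      by (metis inner_add_right inner_scaleR_right inner_zero_right)
    moreover have "s $ j > 0" using d[of j] by (simp add: s_def)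
    ultimately show False using pos by (smt (verit) mult_pos_pos)
  qed
  have "(R ** U) $ i $ j = (U ** diag_mat s) $ i $ j" for i j
  proof -
    have "(R ** U) $ i $ j = (R *v column j U) $ i" by (rule matrix_mul_column)
    then show ?thesis using col[of j] by (simp add: mul_diag_entry column_def)
  qed
  then have RU: "R ** U = U ** diag_mat s" by (simp add: vec_eq_iff)
  have "R = R ** (U ** transpose U)" using U by (simp add: orthogonal_mul_transpose)
  also have "\<dots> = spectral_mat U s" by (simp add: matrix_mul_assoc RU)
  finally show ?thesis by (simp add: s_def)
qed

text \<open>The positive definite square root exists, so pd_sqrt really is the square root.\<close>
lemma pd_sqrt:
  fixes M :: "real^'n^'n"
  assumes "pos_def_mat M"
  shows "pos_def_mat (pd_sqrt M)" and "pd_sqrt M ** pd_sqrt M = M"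
proof -
  obtain U d where U: "orthogonal_matrix U" and M: "M = spectral_mat U d"
    and d: "\<And>i. d $ i > 0" using pd_spectral_decomposition[OF assms] by blast
  let ?R = "spectral_mat U (\<chi> i. sqrt (d $ i))"
  have "pos_def_mat ?R" using U d by (intro pd_spectral_mat) auto
  moreover have "?R ** ?R = M"
    using U d by (simp add: M spectral_mat_mul less_imp_le)
  ultimately have "\<exists>!R. pos_def_mat R \<and> R ** R = M"
    using pd_square_root_spectral[OF _ _ U d] M by metis
  from theI'[OF this] show "pos_def_mat (pd_sqrt M)" "pd_sqrt M ** pd_sqrt M = M"
    unfolding pd_sqrt_def by auto
qed

lemma pd_inverse:
  fixes M :: "real^'n^'n"
  assumes "pos_def_mat M"
  shows "M ** matrix_inv M = mat 1" and "matrix_inv M ** M = mat 1"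
    and "pos_def_mat (matrix_inv M)"
proof -
  obtain U d where U: "orthogonal_matrix U" and M: "M = spectral_mat U d"
    and d: "\<And>i. d $ i > 0" using pd_spectral_decomposition[OF assms] by blast
  have d0: "d $ i \<noteq> 0" for i using d[of i] by simp
  have Mi: "matrix_inv M = spectral_mat U (\<chi> i. 1 / d $ i)"
    using matrix_inv_spectral(2)[OF U d0] M by simp
  show "M ** matrix_inv M = mat 1" "matrix_inv M ** M = mat 1"
    unfolding Mi using U d0 by (simp_all add: M spectral_mat_mul diag_mat_one orthogonal_mul_transpose)
  show "pos_def_mat (matrix_inv M)" unfolding Mi using U d by (intro pd_spectral_mat) auto
qed

lemma pd_inverse_inverse: "pos_def_mat M \<Longrightarrow> matrix_inv (matrix_inv M) = M"
  by (intro matrix_inv_eqI pd_inverse(2))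

lemma pd_det_pos:
  fixes M :: "real^'n^'n"
  assumes "pos_def_mat M"
  shows "det M > 0"
proof -
  obtain U d where U: "orthogonal_matrix U" and M: "M = spectral_mat U d"
    and d: "\<And>i. d $ i > 0" using pd_spectral_decomposition[OF assms] by blast
  show ?thesis using d unfolding M det_orthogonal_conj[OF U] det_diag_mat by (simp add: prod_pos)
qed

lemma pd_congruence:
  fixes P R :: "real^'n^'n"
  assumes P: "pos_def_mat P" and R: "pos_def_mat R"
  shows "pos_def_mat (R ** P ** R)"
  unfolding pos_def_mat_def
proof (intro conjI allI impI)
  show "transpose (R ** P ** R) = R ** P ** R"
    using pd_symmetric[OF P] pd_symmetric[OF R] by (simp add: matrix_transpose_mul matrix_mul_assoc)
  fix x :: "real^'n" assume "x \<noteq> 0"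
  then have Rx: "R *v x \<noteq> 0" using pd_injective[OF R] by blast
  have "x \<bullet> ((R ** P ** R) *v x) = (R *v x) \<bullet> (P *v (R *v x))"
    using pd_symmetric[OF R]
    by (simp add: matrix_vector_mul_assoc[symmetric] inner_matrix_transpose)
  also have "\<dots> > 0" using P Rx by (simp add: pos_def_mat_def)
  finally show "0 < x \<bullet> ((R ** P ** R) *v x)" .
qed

section \<open>Whitening by the square root of \<Psi>\<close>

lemma sandwich_cancel:
  fixes R Ri S :: "real^'n^'n"
  assumes "R ** Ri = mat 1" "Ri ** R = mat 1"
  shows "R ** (Ri ** S ** Ri) ** R = S"
proof -
  have "R ** (Ri ** S ** Ri) ** R = (R ** Ri) ** S ** (Ri ** R)" by (simp add: matrix_mul_assoc)
  then show ?thesis using assms by simp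
qed

lemma matrix_inv_sandwich:
  fixes R Ri M Mi :: "real^'n^'n"
  assumes "R ** Ri = mat 1" and "M ** Mi = mat 1"
  shows "matrix_inv (R ** M ** R) = Ri ** Mi ** Ri"
proof (rule matrix_inv_eqI)
  have "(R ** M ** R) ** (Ri ** Mi ** Ri) = R ** (M ** ((R ** Ri) ** Mi)) ** Ri"
    by (simp add: matrix_mul_assoc)
  then show "(R ** M ** R) ** (Ri ** Mi ** Ri) = mat 1" using assms by simp
qed

lemma whitening_surjective:
  fixes \<Psi> \<Lambda> :: "real^'n^'n"
  assumes \<Psi>: "pos_def_mat \<Psi>" and \<Lambda>: "pos_def_mat \<Lambda>"
  defines "R \<equiv> pd_sqrt \<Psi>"
  shows "pos_def_mat (R ** matrix_inv \<Lambda> ** R)"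
    and "R ** matrix_inv (R ** matrix_inv \<Lambda> ** R) ** R = \<Lambda>"
proof -
  have R: "pos_def_mat R" using pd_sqrt(1)[OF \<Psi>] by (simp add: R_def)
  show "pos_def_mat (R ** matrix_inv \<Lambda> ** R)" using pd_congruence pd_inverse(3) \<Lambda> R by blast
  have "matrix_inv (R ** matrix_inv \<Lambda> ** R) = matrix_inv R ** \<Lambda> ** matrix_inv R"
    using pd_inverse(1)[OF R] pd_inverse(2)[OF \<Lambda>] by (rule matrix_inv_sandwich)
  then show "R ** matrix_inv (R ** matrix_inv \<Lambda> ** R) ** R = \<Lambda>"
    using pd_inverse(1,2)[OF R] by (simp add: sandwich_cancel)
qed

lemma candidate_whitened_precision:
  fixes \<Psi> V :: "real^'n^'n"
  assumes \<Psi>: "pos_def_mat \<Psi>" and V: "orthogonal_matrix V" and l: "\<And>k. l $ k > 0"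
  defines "R \<equiv> pd_sqrt \<Psi>"
  shows "pos_def_mat (R ** V ** matrix_inv (diag_mat l) ** transpose V ** R)"
    and "R ** matrix_inv (R ** V ** matrix_inv (diag_mat l) ** transpose V ** R) ** R = spectral_mat V l"
proof -
  have "R ** V ** matrix_inv (diag_mat l) ** transpose V ** R = R ** matrix_inv (spectral_mat V l) ** R"
    using matrix_inv_spectral[OF V, of l] l by (simp add: matrix_mul_assoc order_less_imp_not_eq2)
  then show "pos_def_mat (R ** V ** matrix_inv (diag_mat l) ** transpose V ** R)"
    and "R ** matrix_inv (R ** V ** matrix_inv (diag_mat l) ** transpose V ** R) ** R = spectral_mat V l"
    using whitening_surjective[OF \<Psi> pd_spectral_mat[OF V l]] by (simp_all add: R_def)
qed

lemma whitening_injective: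
  fixes \<Psi> \<Sigma>\<^sub>1 \<Sigma>\<^sub>2 :: "real^'n^'n"
  assumes \<Psi>: "pos_def_mat \<Psi>" and "pos_def_mat \<Sigma>\<^sub>1" "pos_def_mat \<Sigma>\<^sub>2"
    and eq: "pd_sqrt \<Psi> ** matrix_inv \<Sigma>\<^sub>1 ** pd_sqrt \<Psi> = pd_sqrt \<Psi> ** matrix_inv \<Sigma>\<^sub>2 ** pd_sqrt \<Psi>"
  shows "\<Sigma>\<^sub>1 = \<Sigma>\<^sub>2"
proof -
  let ?R = "pd_sqrt \<Psi>" and ?Ri = "matrix_inv (pd_sqrt \<Psi>)"
  have inv: "?Ri ** ?R = mat 1" "?R ** ?Ri = mat 1" using pd_inverse pd_sqrt(1)[OF \<Psi>] by auto
  have "matrix_inv \<Sigma>\<^sub>1 = ?Ri ** (?R ** matrix_inv \<Sigma>\<^sub>1 ** ?R) ** ?Ri"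
    using sandwich_cancel[OF inv] by simp
  also have "\<dots> = matrix_inv \<Sigma>\<^sub>2" using sandwich_cancel[OF inv] by (simp add: eq)
  finally show ?thesis using pd_inverse_inverse assms(2,3) by metis
qed

section \<open>The scalar problem\<close>

text \<open>The stationarity equation q t^q + b t = N of the scalar objective has exactly one positive
  solution: the left side is strictly increasing on (0, infinity), below N at 0 and above N
  at N + 1.\<close>
lemma unique_positive_root:
  fixes b N :: real and q :: nat
  assumes "b \<ge> 0" "q \<ge> 1" "N > 0"
  shows "\<exists>!l. l > 0 \<and> real q * l ^ q + b * l - N = 0"
proof -
  define f where "f l = real q * l ^ q + b * l - N" for l
  have cont: "continuous_on {0..N + 1} f" unfolding f_def by (intro continuous_intros)
  have f0: "f 0 < 0" using assms by (simp add: f_def power_0_left)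
  have "N + 1 \<le> (N + 1) ^ q" using assms by (simp add: power_increasing[of 1 q "N + 1", simplified])
  also have "\<dots> \<le> real q * (N + 1) ^ q" using assms by (simp add: mult_le_cancel_right1)
  finally have "N + 1 \<le> real q * (N + 1) ^ q" .
  moreover have "0 \<le> b * (N + 1)" using assms by simp
  ultimately have "0 \<le> f (N + 1)" by (simp add: f_def)
  then obtain l where l: "0 \<le> l" "f l = 0" using IVT'[of f 0 0 "N + 1"] f0 cont assms by auto
  have mono: "f x < f y" if "0 < x" "x < y" for x y
  proof -
    have "real q * x ^ q < real q * y ^ q" using that assms by (simp add: power_strict_mono)
    moreover have "b * x \<le> b * y" using that assms by (intro mult_left_mono) auto
    ultimately show ?thesis by (simp add: f_def)
  qed
  have "l > 0" using l f0 by (cases "l = 0") auto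
  then show ?thesis using l mono unfolding f_def[symmetric]
    by (metis linorder_neqE_linordered_idom order_less_irrefl)
qed

lemma stationary_roots:
  fixes a :: "real^'n" and N :: real and n q :: nat
  assumes "\<And>k. a $ k \<ge> 0" and "q \<ge> 1" and "N > 0"
  defines "l \<equiv> \<chi> k. THE t. t > 0 \<and> real q * t ^ q + real n * a $ k * t - N = 0"
  shows "\<exists>!t. t > 0 \<and> real q * t ^ q + real n * a $ k * t - N = 0"
    and "l $ k > 0" and "real q * l $ k ^ q + real n * a $ k * l $ k - N = 0"
proof -
  show roots: "\<exists>!t. t > 0 \<and> real q * t ^ q + real n * a $ k * t - N = 0"
    using unique_positive_root[of "real n * a $ k" q N] assms(1)[of k] assms(2,3) by simp
  show "l $ k > 0" and "real q * l $ k ^ q + real n * a $ k * l $ k - N = 0"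
    using theI'[OF roots] unfolding l_def by auto
qed

text \<open>The contribution of one eigen-direction to the log posterior.\<close>
definition scalar_objective :: "real \<Rightarrow> real \<Rightarrow> nat \<Rightarrow> real \<Rightarrow> real" where
  "scalar_objective N b q t = N * ln t - b * t - t ^ q"

text \<open>With t = l x this follows from ln x \<le> x - 1 (strict unless x = 1) and
  Bernoulli's inequality x^q \<ge> 1 + q (x - 1).\<close>
lemma scalar_objective_max:
  fixes N b t l :: real and q :: nat
  assumes "N > 0" "l > 0" "t > 0" "real q * l ^ q + b * l - N = 0"
  shows "scalar_objective N b q t \<le> scalar_objective N b q l"
    and "t \<noteq> l \<Longrightarrow> scalar_objective N b q t < scalar_objective N b q l"
proof -
  define x where "x = t / l"
  have x: "x > 0" using assms by (simp add: x_def)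
  have t: "t = l * x" using assms by (simp add: x_def)
  have lnt: "ln t = ln l + ln x" using assms x by (simp add: t ln_mult)
  have tq: "t ^ q = l ^ q * x ^ q" by (simp add: t power_mult_distrib)
  have "1 + real q * (x - 1) \<le> (1 + (x - 1)) ^ q" using x by (intro Bernoulli_inequality) simp
  then have bern: "l ^ q * (1 + real q * (x - 1)) \<le> l ^ q * x ^ q"
    using assms by (intro mult_left_mono) auto
  have key: "N * (x - 1) - b * l * x - l ^ q * (1 + real q * (x - 1)) = - b * l - l ^ q"
  proof -
    have "N = real q * l ^ q + b * l" using assms(4) by simp
    then show ?thesis by (simp add: algebra_simps)
  qed
  have "N * ln x \<le> N * (x - 1)" using assms x ln_le_minus_one by (intro mult_left_mono) auto
  then show "scalar_objective N b q t \<le> scalar_objective N b q l"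
    using bern key unfolding scalar_objective_def lnt tq by (simp add: t algebra_simps)
  assume "t \<noteq> l"
  then have "ln x \<noteq> x - 1" using x ln_eq_minus_one t by force
  then have "ln x < x - 1" using x ln_le_minus_one by (simp add: order_less_le)
  then have "N * ln x < N * (x - 1)" using assms by simp
  then show "scalar_objective N b q t < scalar_objective N b q l"
    using bern key unfolding scalar_objective_def lnt tq by (simp add: t algebra_simps)
qed

lemma trace_outer_sum:
  fixes P :: "real^'n^'n" and e :: "nat \<Rightarrow> real^'n"
  shows "trace (P ** (\<Sum>i\<in>I. outer (e i) (e i))) = (\<Sum>i\<in>I. e i \<bullet> (P *v e i))"
proof -
  have "trace (P ** (\<Sum>i\<in>I. outer (e i) (e i)))
      = (\<Sum>a\<in>UNIV. \<Sum>b\<in>UNIV. \<Sum>i\<in>I. P$a$b * (e i $ b * e i $ a))"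
    by (simp add: trace_def matrix_matrix_mult_def outer_def sum_distrib_left)
  also have "\<dots> = (\<Sum>a\<in>UNIV. \<Sum>i\<in>I. \<Sum>b\<in>UNIV. P$a$b * (e i $ b * e i $ a))"
    by (intro sum.cong refl) (rule sum.swap)
  also have "\<dots> = (\<Sum>i\<in>I. \<Sum>a\<in>UNIV. \<Sum>b\<in>UNIV. P$a$b * (e i $ b * e i $ a))"
    by (rule sum.swap)
  also have "\<dots> = (\<Sum>i\<in>I. e i \<bullet> (P *v e i))"
    by (simp add: inner_vec_def matrix_vector_mult_def sum_distrib_left mult_ac)
  finally show ?thesis .
qed

lemma sum_quadratic_split:
  fixes X :: "nat \<Rightarrow> real^'p" and P :: "real^'p^'p"
  assumes n: "n \<ge> 1" and sym: "transpose P = P"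
  shows "(\<Sum>i<n. (X i - \<nu>) \<bullet> (P *v (X i - \<nu>))) =
     real n * trace (P ** sample_cov n X)
     + real n * ((sample_mean n X - \<nu>) \<bullet> (P *v (sample_mean n X - \<nu>)))"
proof -
  define e where "e i = X i - sample_mean n X" for i
  define d where "d = sample_mean n X - \<nu>"
  have "(\<Sum>i<n. e i) = (\<Sum>i<n. X i) - (\<Sum>i<n. sample_mean n X)"
    by (simp add: e_def sum_subtractf)
  also have "(\<Sum>i<n. sample_mean n X) = real n *\<^sub>R sample_mean n X"
    by (subst sum_constant_scaleR) simp
  also have "\<dots> = (\<Sum>i<n. X i)" using n by (simp add: sample_mean_def)
  finally have sum_e: "(\<Sum>i<n. e i) = 0" by simp
  have expand: "(X i - \<nu>) \<bullet> (P *v (X i - \<nu>))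
      = e i \<bullet> (P *v e i) + 2 * ((P *v d) \<bullet> e i) + d \<bullet> (P *v d)" for i
  proof -
    have Xi: "X i - \<nu> = e i + d" by (simp add: e_def d_def)
    have "e i \<bullet> (P *v d) = (P *v d) \<bullet> e i" by (simp add: inner_commute)
    moreover have "d \<bullet> (P *v e i) = (P *v d) \<bullet> e i" using symmetric_inner_swap[OF sym] by simp
    ultimately show ?thesis unfolding Xi
      by (simp add: matrix_vector_right_distrib inner_add_left inner_add_right)
  qed
  have cross: "(\<Sum>i<n. (P *v d) \<bullet> e i) = 0"
    using sum_e by (simp add: inner_sum_right[symmetric])
  have "trace (P ** sample_cov n X) = (1 / real n) * trace (P ** (\<Sum>i<n. outer (e i) (e i)))"
    by (simp add: sample_cov_def e_def matrix_scalar_ac scalar_matrix_assoc[symmetric] trace_def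
        sum_distrib_left)
  then have tr: "(\<Sum>i<n. e i \<bullet> (P *v e i)) = real n * trace (P ** sample_cov n X)"
    using n by (simp add: trace_outer_sum)
  have "(\<Sum>i<n. (X i - \<nu>) \<bullet> (P *v (X i - \<nu>))) =
      (\<Sum>i<n. e i \<bullet> (P *v e i)) + 2 * (\<Sum>i<n. (P *v d) \<bullet> e i) + real n * (d \<bullet> (P *v d))"
    by (simp add: expand sum.distrib sum_distrib_left)
  then show ?thesis unfolding cross tr by (simp add: d_def)
qed

lemma sample_cov_psd:
  fixes X :: "nat \<Rightarrow> real^'p"
  shows "y \<bullet> (sample_cov n X *v y) \<ge> 0"
proof -
  define e where "e i = X i - sample_mean n X" for i
  define E where "E = (\<Sum>i<n. outer (e i) (e i))"
  have "y \<bullet> (E *v y) = trace (E ** outer y y)"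
    using trace_outer_sum[of E "\<lambda>_. y" "{0::nat}"] by simp
  also have "\<dots> = trace (outer y y ** E)" by (rule trace_mul_sym)
  also have "\<dots> = (\<Sum>i<n. e i \<bullet> (outer y y *v e i))" unfolding E_def by (rule trace_outer_sum)
  also have "\<dots> = (\<Sum>i<n. (y \<bullet> e i)^2)"
    by (simp add: outer_def inner_vec_def matrix_vector_mult_def power2_eq_square sum_product
        sum_distrib_left mult_ac)
  finally have "y \<bullet> (E *v y) \<ge> 0" by (simp add: sum_nonneg)
  moreover have "sample_cov n X = (1 / real n) *\<^sub>R E" by (simp add: sample_cov_def E_def e_def)
  ultimately show ?thesis by (simp add: scaleR_matrix_vector_assoc[symmetric])
qed

lemma congruence_eigenvalue_nonneg:
  fixes B S V :: "real^'n^'n"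
  assumes sym: "transpose B = B" and V: "orthogonal_matrix V"
    and eq: "B ** S ** B = spectral_mat V a" and psd: "\<And>y. y \<bullet> (S *v y) \<ge> 0"
  shows "a $ k \<ge> 0"
proof -
  let ?v = "column k V"
  have "a $ k = ?v \<bullet> (spectral_mat V a *v ?v)"
    using spectral_mat_column[OF V] orthogonal_column_norm(1)[OF V] by simp
  also have "\<dots> = (B *v ?v) \<bullet> (S *v (B *v ?v))"
    using sym by (simp add: eq[symmetric] matrix_vector_mul_assoc[symmetric] inner_matrix_transpose)
  also have "\<dots> \<ge> 0" by (rule psd)
  finally show ?thesis .
qed

lemma whitened_sample_cov_eigenvalue_nonneg:
  fixes X :: "nat \<Rightarrow> real^'p" and \<Psi> V :: "real^'p^'p"
  assumes \<Psi>: "pos_def_mat \<Psi>" and V: "orthogonal_matrix V"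
    and A: "matrix_inv (pd_sqrt \<Psi>) ** sample_cov n X ** matrix_inv (pd_sqrt \<Psi>) = spectral_mat V a"
  shows "a $ k \<ge> 0"
  using congruence_eigenvalue_nonneg[OF pd_symmetric[OF pd_inverse(3)[OF pd_sqrt(1)[OF \<Psi>]]] V A
      sample_cov_psd] .

section \<open>Decomposition of the posterior\<close>

text \<open>The log posterior as a function of the whitened precision Lam = R Sigma^-1 R, up to the
  mean term and an additive constant; A is the whitened sample covariance.\<close>
definition whitened_objective :: "real \<Rightarrow> nat \<Rightarrow> nat \<Rightarrow> real^'n^'n \<Rightarrow> real^'n^'n \<Rightarrow> real" where
  "whitened_objective N n q A \<Lambda> = N * ln (det \<Lambda>) - real n * trace (\<Lambda> ** A) - trace (mat_pow \<Lambda> q)"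

lemma posterior_decomposition:
  fixes X :: "nat \<Rightarrow> real^'p" and \<Psi> \<Sigma> :: "real^'p^'p" and \<mu> :: "real^'p"
    and n q :: nat and m :: real
  defines "R \<equiv> pd_sqrt \<Psi>"
    and "A \<equiv> matrix_inv (pd_sqrt \<Psi>) ** sample_cov n X ** matrix_inv (pd_sqrt \<Psi>)"
    and "N \<equiv> real n + real CARD('p) + real q * m + 1"
  assumes n: "n \<ge> 1" and \<Psi>: "pos_def_mat \<Psi>" and \<Sigma>: "pos_def_mat \<Sigma>"
  shows "posterior c n X \<Psi> m q \<mu> \<Sigma> =
    (1/c) * det \<Psi> powr (real q * m / 2) * exp (- (N/2) * ln (det \<Psi>)) *
    exp ((whitened_objective N n q A (R ** matrix_inv \<Sigma> ** R)
          - real n * ((sample_mean n X - \<mu>) \<bullet> (matrix_inv \<Sigma> *v (sample_mean n X - \<mu>)))) / 2)"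
proof -
  define Ri where "Ri = matrix_inv R"
  define P where "P = matrix_inv \<Sigma>"
  define \<Lambda> where "\<Lambda> = R ** P ** R"
  define Q where "Q = (sample_mean n X - \<mu>) \<bullet> (P *v (sample_mean n X - \<mu>))"
  have R: "pos_def_mat R" "R ** R = \<Psi>" using pd_sqrt[OF \<Psi>] by (simp_all add: R_def)
  have RRi: "R ** Ri = mat 1" "Ri ** R = mat 1" using pd_inverse[OF R(1)] by (simp_all add: Ri_def)
  have P: "\<Sigma> ** P = mat 1" "pos_def_mat P" using pd_inverse[OF \<Sigma>] by (simp_all add: P_def)
  have inv: "matrix_inv (Ri ** \<Sigma> ** Ri) = \<Lambda>"
    unfolding \<Lambda>_def using RRi(2) P(1) by (rule matrix_inv_sandwich)
  have "det \<Sigma> * det P = 1" using P(1) by (metis det_I det_mul)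
  moreover have "det R * det R = det \<Psi>" using R(2) by (metis det_mul)
  ultimately have det: "det \<Sigma> * det \<Lambda> = det \<Psi>" by (simp add: \<Lambda>_def det_mul algebra_simps)
  have "ln (det \<Psi>) = ln (det \<Sigma>) + ln (det \<Lambda>)"
    unfolding det[symmetric] using pd_det_pos[OF \<Sigma>] pd_det_pos[OF pd_congruence[OF P(2) R(1)]]
    by (simp add: \<Lambda>_def ln_mult)
  then have lndet: "ln (det \<Sigma>) = ln (det \<Psi>) - ln (det \<Lambda>)" by simp
  have "sample_cov n X = R ** A ** R"
    using sandwich_cancel[OF RRi] by (simp add: A_def Ri_def R_def)
  then have "trace (P ** sample_cov n X) = trace (R ** (P ** R ** A))"
    using trace_mul_sym[of "P ** R ** A" R] by (simp add: matrix_mul_assoc)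
  then have tr: "trace (P ** sample_cov n X) = trace (\<Lambda> ** A)" by (simp add: \<Lambda>_def matrix_mul_assoc)
  have quad: "(\<Sum>i<n. (X i - \<mu>) \<bullet> (P *v (X i - \<mu>))) = real n * trace (\<Lambda> ** A) + real n * Q"
    using sum_quadratic_split[OF n pd_symmetric[OF P(2)]] tr by (simp add: Q_def)
  have expo: "(- real n / 2) * ln (det \<Sigma>) + - (1/2) * (real n * trace (\<Lambda> ** A) + real n * Q)
      + - (1/2) * trace (mat_pow \<Lambda> q) + (- (real q * m + real CARD('p) + 1) / 2) * ln (det \<Sigma>)
    = - (N/2) * ln (det \<Psi>) + (whitened_objective N n q A \<Lambda> - real n * Q) / 2"
    unfolding lndet whitened_objective_def N_def by (simp add: field_simps)
  have "posterior c n X \<Psi> m q \<mu> \<Sigma> = det \<Sigma> powr (- real n / 2)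
      * exp (- (1/2) * (real n * trace (\<Lambda> ** A) + real n * Q))
      * ((1/c) * exp (- (1/2) * trace (mat_pow \<Lambda> q)) * det \<Psi> powr (real q * m / 2)
         * det \<Sigma> powr (- (real q * m + real CARD('p) + 1) / 2))"
    unfolding posterior_def likelihood_def pow_inv_wishart_def
    by (simp only: quad[unfolded P_def] inv[unfolded Ri_def R_def])
  also have "\<dots> = (1/c) * det \<Psi> powr (real q * m / 2)
      * (exp ((- real n / 2) * ln (det \<Sigma>)) * exp (- (1/2) * (real n * trace (\<Lambda> ** A) + real n * Q))
        * exp (- (1/2) * trace (mat_pow \<Lambda> q)) * exp ((- (real q * m + real CARD('p) + 1) / 2) * ln (det \<Sigma>)))"
    using pd_det_pos[OF \<Sigma>] by (simp add: powr_def mult_ac)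
  also have "exp ((- real n / 2) * ln (det \<Sigma>)) * exp (- (1/2) * (real n * trace (\<Lambda> ** A) + real n * Q))
        * exp (- (1/2) * trace (mat_pow \<Lambda> q)) * exp ((- (real q * m + real CARD('p) + 1) / 2) * ln (det \<Sigma>))
      = exp (- (N/2) * ln (det \<Psi>)) * exp ((whitened_objective N n q A \<Lambda> - real n * Q) / 2)"
    by (simp only: exp_add[symmetric] expo)
  finally show ?thesis by (simp add: mult_ac \<Lambda>_def P_def Q_def)
qed

section \<open>Maximising the whitened objective\<close>

lemma trace_spectral_product:
  fixes U V :: "real^'n^'n"
  shows "trace (spectral_mat U d ** spectral_mat V a) =
    (\<Sum>j\<in>UNIV. \<Sum>k\<in>UNIV. d $ j * a $ k * ((transpose V ** U) $ k $ j)^2)"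
proof -
  let ?W = "transpose V ** U"
  have trace_diag: "trace (diag_mat d ** Y) = (\<Sum>j\<in>UNIV. d $ j * Y $ j $ j)" for Y :: "real^'n^'n"
    by (simp add: trace_def diag_mul_entry)
  have weights: "(transpose ?W ** diag_mat a ** ?W) $ j $ j = (\<Sum>k\<in>UNIV. a $ k * (?W $ k $ j)^2)" for j
    by (simp add: matrix_matrix_mult_def diag_mat_def transpose_def if_distrib if_distribR
        power2_eq_square mult_ac cong: if_cong)
  have "trace (spectral_mat U d ** spectral_mat V a)
      = trace (U ** (diag_mat d ** (transpose U ** V ** diag_mat a ** transpose V)))"
    by (simp add: matrix_mul_assoc)
  also have "\<dots> = trace ((diag_mat d ** (transpose U ** V ** diag_mat a ** transpose V)) ** U)"
    by (rule trace_mul_sym)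
  also have "\<dots> = trace (diag_mat d ** (transpose ?W ** diag_mat a ** ?W))"
    by (simp add: matrix_transpose_mul matrix_mul_assoc)
  also have "\<dots> = (\<Sum>j\<in>UNIV. \<Sum>k\<in>UNIV. d $ j * a $ k * (?W $ k $ j)^2)"
    by (simp add: trace_diag weights sum_distrib_left mult_ac)
  finally show ?thesis .
qed

lemma whitened_objective_spectral:
  fixes U V :: "real^'n^'n"
  assumes U: "orthogonal_matrix U" and V: "orthogonal_matrix V" and d: "\<And>j. d $ j > 0"
  shows "whitened_objective N n q (spectral_mat V a) (spectral_mat U d) =
    (\<Sum>j\<in>UNIV. \<Sum>k\<in>UNIV. ((transpose V ** U) $ k $ j)^2 * scalar_objective N (real n * a $ k) q (d $ j))"
proof -
  define W where "W = transpose V ** U"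
  have W: "orthogonal_matrix W" unfolding W_def using U V by (simp add: orthogonal_matrix_mul)
  have "ln (det (spectral_mat U d)) = ln (\<Prod>j\<in>UNIV. d $ j)"
    by (simp add: det_orthogonal_conj[OF U] det_diag_mat)
  also have "\<dots> = (\<Sum>j\<in>UNIV. ln (d $ j))" using d by (intro ln_prod) (auto simp: order_less_imp_not_eq2)
  finally have logdet: "ln (det (spectral_mat U d)) = (\<Sum>j\<in>UNIV. ln (d $ j))" .
  have power: "trace (mat_pow (spectral_mat U d) q) = (\<Sum>j\<in>UNIV. d $ j ^ q)"
    by (simp add: mat_pow_spectral[OF U] trace_orthogonal_conj[OF U] trace_diag_mat)
  have column: "(\<Sum>k\<in>UNIV. (W $ k $ j)^2 * scalar_objective N (real n * a $ k) q (d $ j))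
      = N * ln (d $ j) - d $ j ^ q - real n * (\<Sum>k\<in>UNIV. d $ j * a $ k * (W $ k $ j)^2)" for j
  proof -
    have "(\<Sum>k\<in>UNIV. (W $ k $ j)^2 * scalar_objective N (real n * a $ k) q (d $ j))
      = (N * ln (d $ j) - d $ j ^ q) * (\<Sum>k\<in>UNIV. (W $ k $ j)^2)
        - real n * (\<Sum>k\<in>UNIV. d $ j * a $ k * (W $ k $ j)^2)"
      by (simp add: scalar_objective_def algebra_simps sum_subtractf sum_distrib_left sum.distrib)
    then show ?thesis by (simp add: orthogonal_column_norm(2)[OF W])
  qed
  show ?thesis
    unfolding whitened_objective_def logdet power trace_spectral_product W_def[symmetric] column
    by (simp add: sum_subtractf sum_distrib_left)
qed

text \<open>Averaging with the squared entries of an orthogonal matrix W: every row of these weights sums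
  to one, so if each f_k is maximal at l_k the weighted sum is at most sum_k f_k(l_k), and
  strictly so unless W couples d_j with l_k only when d_j = l_k, i.e. unless W diag(d) = diag(l) W.\<close>
lemma orthogonal_weights_bound:
  fixes W :: "real^'n^'n" and f :: "'n \<Rightarrow> real \<Rightarrow> real"
  assumes W: "orthogonal_matrix W"
    and le: "\<And>j k. f k (d $ j) \<le> f k (l $ k)"
    and less: "\<And>j k. d $ j \<noteq> l $ k \<Longrightarrow> f k (d $ j) < f k (l $ k)"
    and ne: "W ** diag_mat d \<noteq> diag_mat l ** W"
  shows "(\<Sum>j\<in>UNIV. \<Sum>k\<in>UNIV. (W $ k $ j)^2 * f k (d $ j)) < (\<Sum>k\<in>UNIV. f k (l $ k))"
proof -
  have rows: "(\<Sum>j\<in>UNIV. \<Sum>k\<in>UNIV. (W $ k $ j)^2 * f k (l $ k)) = (\<Sum>k\<in>UNIV. f k (l $ k))"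
    by (subst sum.swap) (simp add: sum_distrib_right[symmetric] orthogonal_row_sum[OF W])
  obtain k0 j0 where kj: "W $ k0 $ j0 \<noteq> 0" "d $ j0 \<noteq> l $ k0"
  proof (rule ccontr)
    assume "\<not> thesis"
    then have "W $ k $ j = 0 \<or> d $ j = l $ k" for k j using that by blast
    then have "W ** diag_mat d = diag_mat l ** W"
      by (auto simp: vec_eq_iff mul_diag_entry diag_mul_entry)
    then show False using ne by contradiction
  qed
  have term_le: "(W $ k $ j)^2 * f k (d $ j) \<le> (W $ k $ j)^2 * f k (l $ k)" for j k
    by (intro mult_left_mono le) simp
  have "(W $ k0 $ j0)^2 * f k0 (d $ j0) < (W $ k0 $ j0)^2 * f k0 (l $ k0)"
    using kj by (intro mult_strict_left_mono less) auto
  then have "(\<Sum>k\<in>UNIV. (W $ k $ j0)^2 * f k (d $ j0)) < (\<Sum>k\<in>UNIV. (W $ k $ j0)^2 * f k (l $ k))"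
    using term_le by (intro sum_strict_mono_ex1) auto
  then have "(\<Sum>j\<in>UNIV. \<Sum>k\<in>UNIV. (W $ k $ j)^2 * f k (d $ j))
      < (\<Sum>j\<in>UNIV. \<Sum>k\<in>UNIV. (W $ k $ j)^2 * f k (l $ k))"
    using term_le by (intro sum_strict_mono_ex1) (auto intro: sum_mono)
  then show ?thesis using rows by simp
qed

lemma whitened_objective_strict_max:
  fixes V \<Lambda> :: "real^'n^'n"
  assumes V: "orthogonal_matrix V" and N: "N > 0" and l: "\<And>k. l $ k > 0"
    and root: "\<And>k. real q * l $ k ^ q + real n * a $ k * l $ k - N = 0"
    and \<Lambda>: "pos_def_mat \<Lambda>" and ne: "\<Lambda> \<noteq> spectral_mat V l"
  shows "whitened_objective N n q (spectral_mat V a) \<Lambda>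
    < whitened_objective N n q (spectral_mat V a) (spectral_mat V l)"
proof -
  obtain U d where U: "orthogonal_matrix U" and \<Lambda>_eq: "\<Lambda> = spectral_mat U d"
    and d: "\<And>j. d $ j > 0" using pd_spectral_decomposition[OF \<Lambda>] by blast
  define W where "W = transpose V ** U"
  have W: "orthogonal_matrix W" unfolding W_def using U V by (simp add: orthogonal_matrix_mul)
  define f where "f k t = scalar_objective N (real n * a $ k) q t" for k t
  have hat: "whitened_objective N n q (spectral_mat V a) (spectral_mat V l) = (\<Sum>k\<in>UNIV. f k (l $ k))"
    using V by (simp add: whitened_objective_spectral[OF V V l] orthogonal_transpose_mul mat_def
        f_def if_distrib if_distribR cong: if_cong)
  have "W ** diag_mat d \<noteq> diag_mat l ** W"
  proof
    assume commute: "W ** diag_mat d = diag_mat l ** W"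
    have "U = V ** W" using V by (simp add: W_def matrix_mul_assoc orthogonal_mul_transpose)
    then have "spectral_mat U d = V ** (W ** diag_mat d) ** transpose W ** transpose V"
      by (simp add: matrix_transpose_mul matrix_mul_assoc)
    also have "\<dots> = V ** diag_mat l ** (W ** transpose W) ** transpose V"
      by (simp add: commute matrix_mul_assoc)
    also have "\<dots> = spectral_mat V l" using W by (simp add: orthogonal_mul_transpose)
    finally show False using ne \<Lambda>_eq by simp
  qed
  from orthogonal_weights_bound[OF W _ _ this, of f]
  show ?thesis
    unfolding \<Lambda>_eq hat whitened_objective_spectral[OF U V d] W_def[symmetric] f_def
    using scalar_objective_max[OF N l d root] by (simp add: mult.assoc)
qed

lemma posterior_strict_max:
  fixes X :: "nat \<Rightarrow> real^'p" and \<Psi> \<Sigma> \<Sigma>h :: "real^'p^'p" and \<mu> :: "real^'p"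
    and n q :: nat and m :: real
  defines "R \<equiv> pd_sqrt \<Psi>"
    and "A \<equiv> matrix_inv (pd_sqrt \<Psi>) ** sample_cov n X ** matrix_inv (pd_sqrt \<Psi>)"
    and "N \<equiv> real n + real CARD('p) + real q * m + 1"
  assumes n: "n \<ge> 1" and \<Psi>: "pos_def_mat \<Psi>" and c: "c > 0" and \<Sigma>h: "pos_def_mat \<Sigma>h"
    and max: "\<And>\<Lambda>. pos_def_mat \<Lambda> \<Longrightarrow> \<Lambda> \<noteq> R ** matrix_inv \<Sigma>h ** R \<Longrightarrow>
      whitened_objective N n q A \<Lambda> < whitened_objective N n q A (R ** matrix_inv \<Sigma>h ** R)"
    and \<Sigma>: "pos_def_mat \<Sigma>" and ne: "(\<mu>, \<Sigma>) \<noteq> (sample_mean n X, \<Sigma>h)"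
  shows "posterior c n X \<Psi> m q \<mu> \<Sigma> < posterior c n X \<Psi> m q (sample_mean n X) \<Sigma>h"
proof -
  define G where "G S = whitened_objective N n q A (R ** matrix_inv S ** R)" for S
  define Q where "Q = (sample_mean n X - \<mu>) \<bullet> (matrix_inv \<Sigma> *v (sample_mean n X - \<mu>))"
  have P: "pos_def_mat (matrix_inv \<Sigma>)" using pd_inverse(3)[OF \<Sigma>] .
  have Q: "real n * Q \<ge> 0" using P n unfolding Q_def pos_def_mat_def
    by (metis inner_zero_left less_eq_real_def mult_nonneg_nonneg of_nat_0_le_iff)
  have "G \<Sigma> - real n * Q < G \<Sigma>h"
  proof (cases "\<Sigma> = \<Sigma>h")
    case True
    then have "sample_mean n X - \<mu> \<noteq> 0" using ne by simp
    then have "Q > 0" using P by (simp add: Q_def pos_def_mat_def)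
    then show ?thesis using True n by simp
  next
    case False
    then have "R ** matrix_inv \<Sigma> ** R \<noteq> R ** matrix_inv \<Sigma>h ** R"
      using whitening_injective[OF \<Psi> \<Sigma> \<Sigma>h] by (auto simp: R_def)
    moreover have "pos_def_mat (R ** matrix_inv \<Sigma> ** R)"
      using pd_congruence[OF P pd_sqrt(1)[OF \<Psi>]] by (simp add: R_def)
    ultimately have "G \<Sigma> < G \<Sigma>h" using max by (simp add: G_def)
    then show ?thesis using Q by simp
  qed
  define K where "K = (1/c) * det \<Psi> powr (real q * m / 2) * exp (- (N/2) * ln (det \<Psi>))"
  have K: "K > 0" using c pd_det_pos[OF \<Psi>] by (simp add: K_def)
  have post: "posterior c n X \<Psi> m q \<nu> S
      = K * exp ((G S - real n * ((sample_mean n X - \<nu>) \<bullet> (matrix_inv S *v (sample_mean n X - \<nu>)))) / 2)"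
    if "pos_def_mat S" for \<nu> S
    unfolding K_def G_def R_def A_def N_def by (rule posterior_decomposition[OF n \<Psi> that])
  have "K * exp ((G \<Sigma> - real n * Q) / 2) < K * exp (G \<Sigma>h / 2)"
    using K \<open>G \<Sigma> - real n * Q < G \<Sigma>h\<close> by simp
  then show ?thesis unfolding post[OF \<Sigma>] post[OF \<Sigma>h] Q_def by simp
qed

theorem theorem3:
  fixes X :: "nat \<Rightarrow> real^'p" and n :: nat and \<Psi> :: "real^'p^'p"
    and m :: real and q :: nat and c :: real
    and V :: "real^'p^'p" and a :: "real^'p"
  assumes "n \<ge> 1"
    and "pos_def_mat \<Psi>"
    and "m \<ge> real CARD('p)"
    and "q \<ge> 1"
    and "c > 0"
    and "orthogonal_matrix V"
    and "matrix_inv (pd_sqrt \<Psi>) ** sample_cov n X ** matrix_inv (pd_sqrt \<Psi>)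
           = V ** diag_mat a ** transpose V"
  shows "let N = real n + real CARD('p) + real q * m + 1;
             lam = (\<chi> i. THE l. l > 0 \<and> real q * l ^ q + real n * a $ i * l - N = 0);
             \<Sigma>hat = pd_sqrt \<Psi> ** V ** matrix_inv (diag_mat lam) ** transpose V ** pd_sqrt \<Psi>;
             \<mu>hat = sample_mean n X
         in (\<forall>i. \<exists>!l. l > 0 \<and> real q * l ^ q + real n * a $ i * l - N = 0)
            \<and> pos_def_mat \<Sigma>hat
            \<and> (\<forall>\<mu> \<Sigma>. pos_def_mat \<Sigma> \<and> (\<mu>, \<Sigma>) \<noteq> (\<mu>hat, \<Sigma>hat) \<longrightarrow>
                 posterior c n X \<Psi> m q \<mu> \<Sigma> < posterior c n X \<Psi> m q \<mu>hat \<Sigma>hat)"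
proof -
  note n = assms(1) and \<Psi> = assms(2) and V = assms(6) and A = assms(7)
  define N where "N = real n + real CARD('p) + real q * m + 1"
  define l where "l = (\<chi> i. THE l. l > 0 \<and> real q * l ^ q + real n * a $ i * l - N = 0)"
  define \<Sigma>h where "\<Sigma>h = pd_sqrt \<Psi> ** V ** matrix_inv (diag_mat l) ** transpose V ** pd_sqrt \<Psi>"
  have "0 \<le> real q * m" using assms(3) by (meson mult_nonneg_nonneg of_nat_0_le_iff order_trans)
  then have N: "N > 0" unfolding N_def by linarith
  note roots = stationary_roots[where n = n, OF whitened_sample_cov_eigenvalue_nonneg[OF \<Psi> V A] assms(4) N,
      folded l_def]
  note \<Sigma>h = candidate_whitened_precision[OF \<Psi> V roots(2), folded \<Sigma>h_def]
  have "whitened_objective N n q (spectral_mat V a) \<Lambda>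
      < whitened_objective N n q (spectral_mat V a) (pd_sqrt \<Psi> ** matrix_inv \<Sigma>h ** pd_sqrt \<Psi>)"
    if "pos_def_mat \<Lambda>" "\<Lambda> \<noteq> pd_sqrt \<Psi> ** matrix_inv \<Sigma>h ** pd_sqrt \<Psi>" for \<Lambda>
    using whitened_objective_strict_max[OF V N roots(2,3) that[unfolded \<Sigma>h(2)]] by (simp add: \<Sigma>h(2))
  from posterior_strict_max[OF n \<Psi> assms(5) \<Sigma>h(1) this[unfolded N_def, folded A]]
  show ?thesis using roots(1) \<Sigma>h(1)
    unfolding Let_def N_def[symmetric] l_def[symmetric] \<Sigma>h_def[symmetric] by blast
qed

end
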